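(* Let $X$ be a complex manifold and let $X=\bigcup_{j\ge1}K_j$ where $(K_j)$ is a sequence of compact sets with $K_j\subset\mathring K_{j+1}$ for all $j$. Let $B\subset X$ be compact and assume there is $j_0\in\mathbb{N}$ with $B\subset K_{j_0}$ and $\widehat B_{\mathcal{O}(K_j)}=\widehat B_{\mathcal{O}(K_{j_0})}$ for all $j\ge j_0$. Then for any other sequence of compact sets $(L_l)_{l\ge1}$ with $L_l\subset\mathring L_{l+1}$ for all $l$ and $\bigcup_l L_l=X$, there exists $l_1\in\mathbb{N}$ such that $B\subset L_{l_1}$ and $\widehat B_{\mathcal{O}(L_l)}=\widehat B_{\mathcal{O}(L_{l_1})}$ for all $l\ge l_1$.
   Context: For compact sets $K\subset L$ in a complex manifold, $\mathcal{O}(L)$ denotes the algebra of functions holomorphic on some open neighborhood of $L$, and $\widehat K_{\mathcal{O}(L)}=\{x\in L: |f(x)|\le\sup_K|f| \text{ for all } f\in\mathcal{O}(L)\}$. *)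

theory Defs
  imports "HOL-Analysis.Analysis"
begin

definition holo_cn :: "(complex^'n::finite) set \<Rightarrow> (complex^'n \<Rightarrow> complex) \<Rightarrow> bool" where
  "holo_cn S g \<longleftrightarrow> (\<forall>z\<in>S. \<exists>D. (g has_derivative D) (at z) \<and> (\<forall>c v. D (c *s v) = c * D v))"

definition complex_atlas :: "('a::topological_space set \<times> ('a \<Rightarrow> complex^'n::finite)) set \<Rightarrow> bool" where
  "complex_atlas A \<longleftrightarrow>
     (\<forall>(U,\<phi>)\<in>A. open U \<and> open (\<phi> ` U) \<and> (\<exists>\<psi>. homeomorphism U (\<phi> ` U) \<phi> \<psi>)) \<and>
     (\<Union>(fst ` A) = UNIV) \<and>
     (\<forall>(U,\<phi>)\<in>A. \<forall>(V,\<psi>)\<in>A. \<forall>k.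
        holo_cn (\<phi> ` (U \<inter> V)) (\<lambda>z. (\<psi> (inv_into U \<phi> z)) $ k))"

definition holo_on_mfd :: "('a::topological_space set \<times> ('a \<Rightarrow> complex^'n::finite)) set \<Rightarrow> 'a set \<Rightarrow> ('a \<Rightarrow> complex) \<Rightarrow> bool" where
  "holo_on_mfd A W f \<longleftrightarrow> open W \<and>
     (\<forall>(U,\<phi>)\<in>A. holo_cn (\<phi> ` (U \<inter> W)) (\<lambda>z. f (inv_into U \<phi> z)))"

definition hol_germs :: "('a::topological_space set \<times> ('a \<Rightarrow> complex^'n::finite)) set \<Rightarrow> 'a set \<Rightarrow> ('a \<Rightarrow> complex) set" where
  "hol_germs A L = {f. \<exists>W. L \<subseteq> W \<and> holo_on_mfd A W f}"

text \<open>The O(L)-hull of K (sup taken in the extended reals, so sup over the empty set is -infinity).\<close>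
definition hol_hull :: "('a::topological_space set \<times> ('a \<Rightarrow> complex^'n::finite)) set \<Rightarrow> 'a set \<Rightarrow> 'a set \<Rightarrow> 'a set" where
  "hol_hull A L K = {x\<in>L. \<forall>f\<in>hol_germs A L.
      ereal (norm (f x)) \<le> (SUP y\<in>K. ereal (norm (f y)))}"

end

theory Submission
  imports Defs
begin

text \<open>Enlarging L shrinks O(L), hence enlarges the O(L)-hull of B. Since every compact set lies
  in some member of either exhaustion, each L l is squeezed between L l1 and some K j with j \<ge> j0,
  where the hull no longer changes.\<close>

lemma hol_hull_mono:
  assumes "L \<subseteq> L'"
  shows "hol_hull A L B \<subseteq> hol_hull A L' B"
proof -
  have "hol_germs A L' \<subseteq> hol_germs A L"
    using assms unfolding hol_germs_def by auto
  then show ?thesis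
    using assms unfolding hol_hull_def by blast
qed

lemma exhaustion_mono:
  fixes L :: "nat \<Rightarrow> 'a::topological_space set"
  assumes "\<And>l. L l \<subseteq> interior (L (Suc l))" and "i \<le> j"
  shows "L i \<subseteq> L j"
  using lift_Suc_mono_le[of L, OF _ assms(2)] assms(1) interior_subset by blast

lemma compact_subset_exhaustion:
  fixes L :: "nat \<Rightarrow> 'a::topological_space set"
  assumes step: "\<And>l. L l \<subseteq> interior (L (Suc l))" and cover: "(\<Union>l. L l) = UNIV"
    and "compact C"
  obtains l where "C \<subseteq> L l"
proof -
  have "C \<subseteq> (\<Union>l. interior (L l))"
    using cover step by blast
  then obtain I where I: "finite I" "C \<subseteq> (\<Union>l\<in>I. interior (L l))"
    using compactE_image[OF \<open>compact C\<close>, of UNIV "\<lambda>l. interior (L l)"] by auto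
  have "interior (L i) \<subseteq> L (Max (insert 0 I))" if "i \<in> I" for i
    using exhaustion_mono[of L, OF step, of i "Max (insert 0 I)"] interior_subset I(1) that by auto
  with I(2) have "C \<subseteq> L (Max (insert 0 I))"
    by blast
  then show thesis
    by (rule that)
qed

theorem lemma4p1:
  fixes A :: "('a::t2_space set \<times> ('a \<Rightarrow> complex^'n::finite)) set"
    and K L :: "nat \<Rightarrow> 'a set" and B :: "'a set" and j0 :: nat
  assumes "complex_atlas A"
    and "\<And>j. compact (K j)" and "\<And>j. K j \<subseteq> interior (K (Suc j))" and "(\<Union>j. K j) = UNIV"
    and "compact B" and "B \<subseteq> K j0"
    and "\<And>j. j \<ge> j0 \<Longrightarrow> hol_hull A (K j) B = hol_hull A (K j0) B"
    and "\<And>l. compact (L l)" and "\<And>l. L l \<subseteq> interior (L (Suc l))" and "(\<Union>l. L l) = UNIV"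
  shows "\<exists>l1. B \<subseteq> L l1 \<and> (\<forall>l\<ge>l1. hol_hull A (L l) B = hol_hull A (L l1) B)"
proof -
  obtain l1 where l1: "K j0 \<subseteq> L l1"
    using compact_subset_exhaustion[OF assms(9,10,2)] .
  have "hol_hull A (L l) B = hol_hull A (L l1) B" if "l \<ge> l1" for l
  proof
    obtain j where "L l \<subseteq> K j"
      using compact_subset_exhaustion[OF assms(3,4,8)] .
    then have "L l \<subseteq> K (max j j0)"
      using exhaustion_mono[of K, OF assms(3), of j "max j j0"] by auto
    then have "hol_hull A (L l) B \<subseteq> hol_hull A (K (max j j0)) B"
      by (rule hol_hull_mono)
    also have "\<dots> = hol_hull A (K j0) B"
      by (rule assms(7)) simp
    also have "\<dots> \<subseteq> hol_hull A (L l1) B"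
      using l1 by (rule hol_hull_mono)
    finally show "hol_hull A (L l) B \<subseteq> hol_hull A (L l1) B" .
    show "hol_hull A (L l1) B \<subseteq> hol_hull A (L l) B"
      by (rule hol_hull_mono[OF exhaustion_mono[of L, OF assms(9) that]])
  qed
  moreover have "B \<subseteq> L l1"
    using assms(6) l1 by blast
  ultimately show ?thesis
    by blast
qed

end
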